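(* Let $\theta,\omega:[0,\varepsilon[\times\mathbb S^1\to\mathbb R$ be of class $C^1$, and write $\bar\theta(t)=\theta(0,t)$, $\bar\omega(t)=\omega(0,t)$. For $\mu\in[0,1]$ let $\varphi^\mu(r,t)=\mu\,\omega(r,t)+(1-\mu)\,\theta(r,t)$. Suppose that $\bar\theta_t<-\lambda_t\sin(2\bar\theta)$ and $\bar\omega(t)=\bar\theta(t)$ for all $t\in\mathbb S^1$. Then there is $\rho_0>0$ such that for all $\mu\in[0,1]$ the surface $H^\mu(r,t)=(r\,u_{\varphi^\mu(r,t)},t)$ is transversal to the vector field $Y$ at all points $(r,t)$ with $0<r<\rho_0$, $t\in\mathbb S^1$.
   Context: $\mathbb S^1=\mathbb R/\mathbb Z$, $u_\beta=(\cos\beta,\sin\beta)\in\mathbb R^2$. In coordinates $(x,y,t)\in\mathbb D_\varepsilon\times\mathbb S^1$ around a period-1 hyperbolic periodic orbit $\Gamma=\{(0,0,t)\}$ of a Reeb flow (with $x$, $y$ axes along the unstable and stable directions), $Y$ is the reparametrization $Y=X/f_3$ of the Reeb vector field $X=(f_1,f_2,f_3)$, so that $Y(x,y,t)=(\lambda_tx,-\lambda_ty,1)+O(x^2+y^2)$ in the first two components and third component $1$, where $t\mapsto\lambda_t$ is a 1-periodic function. Subscripts $t$ and $r$ denote partial derivatives. *)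

theory Defs
  imports "HOL-Analysis.Analysis"
begin

text \<open>Points of D_eps x S^1 are triples (x, y, t); the circle coordinate t is
  taken in the real line, with all data 1-periodic in t.\<close>

text \<open>u_beta = (cos beta, sin beta); the surface H(r,t) = (r u_{phi(r,t)}, t).\<close>
definition surfH :: "(real \<Rightarrow> real \<Rightarrow> real) \<Rightarrow> real \<times> real \<Rightarrow> real \<times> real \<times> real" where
  "surfH phi = (\<lambda>(r, t). (r * cos (phi r t), r * sin (phi r t), t))"

definition transversal_at ::
  "(real \<times> real \<Rightarrow> real \<times> real \<times> real) \<Rightarrow> (real \<times> real \<times> real \<Rightarrow> real \<times> real \<times> real)
     \<Rightarrow> real \<times> real \<Rightarrow> bool" where
  "transversal_at H Y p \<longleftrightarrow>
     (\<exists>H'. (H has_derivative H') (at p) \<and> Y (H p) \<notin> span {H' (1, 0), H' (0, 1)})"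

definition C1_strip :: "real \<Rightarrow> (real \<Rightarrow> real \<Rightarrow> real) \<Rightarrow> (real \<Rightarrow> real \<Rightarrow> real)
     \<Rightarrow> (real \<Rightarrow> real \<Rightarrow> real) \<Rightarrow> bool" where
  "C1_strip eps f fr ft \<longleftrightarrow>
     (\<forall>r t. 0 \<le> r \<and> r < eps \<longrightarrow> f r (t + 1) = f r t) \<and>
     (\<forall>r t. 0 \<le> r \<and> r < eps \<longrightarrow>
        ((\<lambda>(a, b). f a b) has_derivative (\<lambda>(h, k). h * fr r t + k * ft r t))
          (at (r, t) within {0..<eps} \<times> UNIV)) \<and>
     continuous_on ({0..<eps} \<times> UNIV) (\<lambda>(a, b). fr a b) \<and>
     continuous_on ({0..<eps} \<times> UNIV) (\<lambda>(a, b). ft a b)"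

end

theory Submission
  imports Defs
begin

text \<open>
  At a point \<open>(r, t)\<close> put \<open>a = \<phi>\<^sub>r\<close>, \<open>b = \<phi>\<^sub>t\<close>, \<open>c = cos \<phi>\<close>, \<open>s = sin \<phi>\<close> for \<open>\<phi> = \<phi>\<^sup>\<mu>\<close>.
  The tangent plane of \<open>H\<^sup>\<mu>\<close> is spanned by \<open>(c - r s a, s + r c a, 0)\<close> and \<open>(-r s b, r c b, 1)\<close>,
  so \<open>Y = (Y\<^sub>1, Y\<^sub>2, 1)\<close> lies in it iff a planar 2x2 determinant \<open>D\<close> vanishes.
  Inserting \<open>Y = (\<lambda>\<^sub>t r c, -\<lambda>\<^sub>t r s) + O(r\<^sup>2)\<close> gives \<open>D = r (b + \<lambda>\<^sub>t sin 2\<phi>) + O(r\<^sup>2)\<close>.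
  On the circle \<open>r = 0\<close> every \<open>\<phi>\<^sup>\<mu>\<close> and its \<open>t\<close>-derivative agree with those of \<open>\<theta>\<close>, so by
  compactness of \<open>[0,1] \<times> S\<^sup>1\<close> the twist condition gives \<open>b + \<lambda>\<^sub>t sin 2\<phi> \<le> -m < 0\<close> for all
  small \<open>r\<close>, uniformly in \<open>\<mu>\<close> and \<open>t\<close>; hence \<open>D < 0\<close> for small \<open>r > 0\<close>.
\<close>

lemma periodic_eq_frac:
  fixes g :: "real \<Rightarrow> 'a"
  assumes "\<And>t. g (t + 1) = g t"
  shows "g t = g (frac t)"
proof -
  interpret periodic_fun_simple' g by standard (rule assms)
  have "g (frac t + of_int \<lfloor>t\<rfloor>) = g (frac t)" by (rule plus_of_int)
  then show ?thesis by (simp add: frac_def)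
qed

lemma periodic_range_eq:
  fixes g :: "real \<Rightarrow> 'a"
  assumes "\<And>t. g (t + 1) = g t"
  shows "range g = g ` {0..1}"
proof -
  have "g t \<in> g ` {0..1}" for t
    using periodic_eq_frac[of g, OF assms, of t] frac_ge_0[of t] frac_lt_1[of t] by force
  then show ?thesis by auto
qed

lemma continuous_periodic_compact_range:
  fixes g :: "real \<Rightarrow> 'a::topological_space"
  assumes "continuous_on UNIV g" "\<And>t. g (t + 1) = g t"
  shows "compact (range g)"
  unfolding periodic_range_eq[of g, OF assms(2)]
  by (intro compact_continuous_image compact_Icc continuous_on_subset[OF assms(1)]) auto

lemma continuous_periodic_bounded:
  fixes g :: "real \<Rightarrow> real"
  assumes "continuous_on UNIV g" "\<And>t. g (t + 1) = g t"
  shows "\<exists>L. \<forall>t. \<bar>g t\<bar> \<le> L"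
  using compact_imp_bounded[OF continuous_periodic_compact_range[of g, OF assms]]
  unfolding bounded_real by blast

lemma continuous_periodic_negative_bounded_away:
  fixes g :: "real \<Rightarrow> real"
  assumes "continuous_on UNIV g" "\<And>t. g (t + 1) = g t" "\<And>t. g t < 0"
  shows "\<exists>M>0. \<forall>t. g t \<le> - M"
proof -
  obtain t0 where "\<forall>t. g t \<le> g t0"
    using compact_attains_sup[OF continuous_periodic_compact_range[of g, OF assms(1,2)]] by blast
  then show ?thesis using assms(3)[of t0] by (intro exI[of _ "- g t0"]) auto
qed

lemma continuous_on_strip_boundary:
  fixes F :: "real \<Rightarrow> real \<Rightarrow> real"
  assumes "continuous_on ({0..<eps} \<times> UNIV) (\<lambda>(r, t). F r t)" "0 < eps"
  shows "continuous_on UNIV (F 0)"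
proof -
  have "continuous_on UNIV (\<lambda>t. (\<lambda>(r, t). F r t) (0, t))"
    by (rule continuous_on_compose2[OF assms(1)])
       (use assms(2) in \<open>auto intro: continuous_on_Pair continuous_on_const continuous_on_id\<close>)
  then show ?thesis by simp
qed

lemma strip_tendsto_boundary_uniformly:
  fixes F :: "real \<Rightarrow> real \<Rightarrow> real"
  assumes cont: "continuous_on ({0..<eps} \<times> UNIV) (\<lambda>(r, t). F r t)" and "0 < eps"
    and per: "\<And>r t. 0 \<le> r \<Longrightarrow> r < eps \<Longrightarrow> F r (t + 1) = F r t" and "0 < e"
  shows "\<forall>\<^sub>F r in at_right 0. \<forall>t. \<bar>F r t - F 0 t\<bar> < e"
proof -
  let ?K = "{0..eps/2} \<times> {0..1::real}"
  have "uniformly_continuous_on ?K (\<lambda>(r, t). F r t)"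
    using \<open>0 < eps\<close> by (intro compact_uniformly_continuous compact_Times compact_Icc
        continuous_on_subset[OF cont]) auto
  then obtain d where "d > 0" and d: "\<And>p q. p \<in> ?K \<Longrightarrow> q \<in> ?K \<Longrightarrow> dist q p < d \<Longrightarrow>
      dist ((\<lambda>(r, t). F r t) q) ((\<lambda>(r, t). F r t) p) < e"
    unfolding uniformly_continuous_on_def using \<open>0 < e\<close> by metis
  have "\<bar>F r t - F 0 t\<bar> < e" if r: "0 < r" "r < min d (eps/2)" for r t
  proof -
    have "F r t = F r (frac t)" "F 0 t = F 0 (frac t)"
      using periodic_eq_frac[of "F r"] periodic_eq_frac[of "F 0"] per r \<open>0 < eps\<close> by auto
    moreover have "dist (r, frac t) (0, frac t) < d" using r by (simp add: dist_Pair_Pair dist_real_def)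
    ultimately show ?thesis
      using d[of "(0, frac t)" "(r, frac t)"] r frac_ge_0[of t] frac_lt_1[of t]
      by (auto simp: dist_real_def)
  qed
  then show ?thesis
    unfolding eventually_at_right_field using \<open>d > 0\<close> \<open>0 < eps\<close>
    by (intro exI[of _ "min d (eps/2)"]) auto
qed

lemma strip_bounded_at_boundary:
  fixes F :: "real \<Rightarrow> real \<Rightarrow> real"
  assumes cont: "continuous_on ({0..<eps} \<times> UNIV) (\<lambda>(r, t). F r t)" and "0 < eps"
    and per: "\<And>r t. 0 < r \<Longrightarrow> r < eps \<Longrightarrow> F r (t + 1) = F r t"
  shows "\<exists>B. \<forall>\<^sub>F r in at_right 0. \<forall>t. \<bar>F r t\<bar> \<le> B"
proof -
  let ?K = "{0..eps/2} \<times> {0..1::real}"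
  have "compact ((\<lambda>(r, t). F r t) ` ?K)"
    using \<open>0 < eps\<close> by (intro compact_continuous_image compact_Times compact_Icc
        continuous_on_subset[OF cont]) auto
  then obtain B where B: "\<And>p. p \<in> ?K \<Longrightarrow> \<bar>(\<lambda>(r, t). F r t) p\<bar> \<le> B"
    unfolding bounded_real[symmetric] by (metis compact_imp_bounded bounded_real image_eqI)
  have "\<bar>F r t\<bar> \<le> B" if r: "0 < r" "r < eps/2" for r t
  proof -
    have "F r t = F r (frac t)" using periodic_eq_frac[of "F r"] per r by auto
    then show ?thesis using B[of "(r, frac t)"] r frac_ge_0[of t] frac_lt_1[of t] by auto
  qed
  then show ?thesis
    unfolding eventually_at_right_field using \<open>0 < eps\<close> by (intro exI[of _ B] exI[of _ "eps/2"]) auto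
qed

lemma C1_strip_periodic:
  assumes "C1_strip eps f fr ft" "0 \<le> r" "r < eps"
  shows "f r (t + 1) = f r t"
  using assms unfolding C1_strip_def by blast

lemma C1_strip_continuous_partials:
  assumes "C1_strip eps f fr ft"
  shows "continuous_on ({0..<eps} \<times> UNIV) (\<lambda>(r, t). fr r t)"
    and "continuous_on ({0..<eps} \<times> UNIV) (\<lambda>(r, t). ft r t)"
  using assms unfolding C1_strip_def by blast+

lemma C1_strip_has_derivative:
  assumes "C1_strip eps f fr ft" "p \<in> {0..<eps} \<times> UNIV"
  shows "((\<lambda>(r, t). f r t) has_derivative
           (\<lambda>(h, k). h * fr (fst p) (snd p) + k * ft (fst p) (snd p))) (at p within {0..<eps} \<times> UNIV)"
  using assms unfolding C1_strip_def by (auto simp: split_beta)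

lemma C1_strip_continuous:
  assumes "C1_strip eps f fr ft"
  shows "continuous_on ({0..<eps} \<times> UNIV) (\<lambda>(r, t). f r t)"
  unfolding continuous_on_eq_continuous_within
  using C1_strip_has_derivative[OF assms] has_derivative_continuous by blast

lemma C1_strip_has_derivative_interior:
  assumes "C1_strip eps f fr ft" "0 < r" "r < eps"
  shows "((\<lambda>p. f (fst p) (snd p)) has_derivative (\<lambda>p. fst p * fr r t + snd p * ft r t)) (at (r, t))"
proof -
  have "((\<lambda>(r, t). f r t) has_derivative (\<lambda>(h, k). h * fr r t + k * ft r t))
      (at (r, t) within {0<..<eps} \<times> UNIV)"
    using C1_strip_has_derivative[OF assms(1), of "(r, t)"] assms by (auto intro: has_derivative_subset)
  then show ?thesis
    using at_within_open[of "(r, t)" "{0<..<eps} \<times> UNIV"] assms by (simp add: open_Times split_beta')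
qed

lemma C1_strip_has_real_derivative_t:
  assumes "C1_strip eps f fr ft" "0 \<le> r" "r < eps"
  shows "(f r has_real_derivative ft r t) (at t)"
proof -
  have "((\<lambda>s. (\<lambda>(r, t). f r t) (r, s)) has_derivative
      (\<lambda>k. (\<lambda>(h, k). h * fr (fst (r, t)) (snd (r, t)) + k * ft (fst (r, t)) (snd (r, t))) (0, k))) (at t)"
    by (rule has_derivative_in_compose2[OF C1_strip_has_derivative[OF assms(1)]])
       (use assms in \<open>auto intro!: derivative_eq_intros\<close>)
  then show ?thesis by (simp add: has_field_derivative_def mult_commute_abs)
qed

lemma C1_strip_has_real_derivative_r:
  assumes "C1_strip eps f fr ft" "0 < r" "r < eps"
  shows "((\<lambda>r. f r t) has_real_derivative fr r t) (at r)"
proof -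
  have "((\<lambda>s. (\<lambda>(r, t). f r t) (s, t)) has_derivative
      (\<lambda>h. (\<lambda>(h, k). h * fr (fst (r, t)) (snd (r, t)) + k * ft (fst (r, t)) (snd (r, t))) (h, 0)))
      (at r within {0<..<eps})"
    by (rule has_derivative_in_compose2[OF C1_strip_has_derivative[OF assms(1)]])
       (use assms in \<open>auto intro!: derivative_eq_intros\<close>)
  then show ?thesis
    using at_within_open[of r "{0<..<eps}"] assms by (simp add: has_field_derivative_def mult_commute_abs)
qed

lemma C1_strip_periodic_t:
  assumes "C1_strip eps f fr ft" "0 \<le> r" "r < eps"
  shows "ft r (t + 1) = ft r t"
proof -
  have "(f r has_real_derivative ft r (t + 1)) (at t)"
    using DERIV_shift[THEN iffD1, OF C1_strip_has_real_derivative_t[OF assms, of "t + 1"]]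
      C1_strip_periodic[OF assms] by simp
  then show ?thesis using C1_strip_has_real_derivative_t[OF assms] DERIV_unique by blast
qed

text \<open>Only for \<open>r > 0\<close>: at \<open>r = 0\<close> the \<open>r\<close>-derivative is one-sided and \<open>fr 0\<close> is not
  pinned down by uniqueness of derivatives.\<close>

lemma C1_strip_periodic_r:
  assumes "C1_strip eps f fr ft" "0 < r" "r < eps"
  shows "fr r (t + 1) = fr r t"
proof -
  have "((\<lambda>r. f r t) has_real_derivative fr r (t + 1)) (at r)"
    by (rule has_field_derivative_transform_within_open
        [OF C1_strip_has_real_derivative_r[OF assms, of "t + 1"], of "{0<..<eps}"])
       (use assms C1_strip_periodic[OF assms(1)] in auto)
  then show ?thesis using C1_strip_has_real_derivative_r[OF assms] DERIV_unique by blast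
qed

lemma C1_strip_same_boundary_deriv_t:
  assumes "C1_strip eps f fr ft" "C1_strip eps g gr gt" "0 < eps" "f 0 = g 0"
  shows "ft 0 t = gt 0 t"
  using C1_strip_has_real_derivative_t[OF assms(1), of 0 t] C1_strip_has_real_derivative_t[OF assms(2), of 0 t]
    assms(3,4) DERIV_unique by auto

lemma C1_strip_lincomb:
  assumes f: "C1_strip eps f fr ft" and g: "C1_strip eps g gr gt"
  shows "C1_strip eps (\<lambda>r t. \<alpha> * f r t + \<beta> * g r t)
           (\<lambda>r t. \<alpha> * fr r t + \<beta> * gr r t) (\<lambda>r t. \<alpha> * ft r t + \<beta> * gt r t)"
proof -
  have "((\<lambda>(r, t). \<alpha> * f r t + \<beta> * g r t) has_derivative
      (\<lambda>(h, k). h * (\<alpha> * fr r t + \<beta> * gr r t) + k * (\<alpha> * ft r t + \<beta> * gt r t)))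
      (at (r, t) within {0..<eps} \<times> UNIV)" if "0 \<le> r" "r < eps" for r t
    using has_derivative_add[OF has_derivative_mult_right[OF C1_strip_has_derivative[OF f, of "(r, t)"], of \<alpha>]
        has_derivative_mult_right[OF C1_strip_has_derivative[OF g, of "(r, t)"], of \<beta>]] that
    by (auto simp: split_beta' algebra_simps)
  moreover have "continuous_on ({0..<eps} \<times> UNIV) (\<lambda>(r, t). \<alpha> * fr r t + \<beta> * gr r t)"
    "continuous_on ({0..<eps} \<times> UNIV) (\<lambda>(r, t). \<alpha> * ft r t + \<beta> * gt r t)"
    using C1_strip_continuous_partials[OF f] C1_strip_continuous_partials[OF g]
    by (auto simp: split_beta' intro!: continuous_intros)
  ultimately show ?thesis
    using C1_strip_periodic[OF f] C1_strip_periodic[OF g] unfolding C1_strip_def by simp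
qed

lemma C1_strip_tendsto_boundary_uniformly:
  assumes f: "C1_strip eps f fr ft" and "0 < eps" "0 < e"
  shows "\<forall>\<^sub>F r in at_right 0. \<forall>t. \<bar>f r t - f 0 t\<bar> < e \<and> \<bar>ft r t - ft 0 t\<bar> < e"
proof -
  have "\<forall>\<^sub>F r in at_right 0. \<forall>t. \<bar>f r t - f 0 t\<bar> < e"
    by (rule strip_tendsto_boundary_uniformly[OF C1_strip_continuous[OF f] \<open>0 < eps\<close> _ \<open>0 < e\<close>])
       (rule C1_strip_periodic[OF f])
  moreover have "\<forall>\<^sub>F r in at_right 0. \<forall>t. \<bar>ft r t - ft 0 t\<bar> < e"
    by (rule strip_tendsto_boundary_uniformly[OF C1_strip_continuous_partials(2)[OF f] \<open>0 < eps\<close> _ \<open>0 < e\<close>])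
       (rule C1_strip_periodic_t[OF f])
  ultimately show ?thesis by eventually_elim blast
qed

lemma abs_sin_diff_le: "\<bar>sin x - sin y\<bar> \<le> \<bar>x - y\<bar>" for x y :: real
proof -
  have "\<bar>sin x - sin y\<bar> = 2 * \<bar>sin ((x - y) / 2)\<bar> * \<bar>cos ((x + y) / 2)\<bar>"
    by (simp add: sin_diff_sin abs_mult)
  also have "\<dots> \<le> 2 * \<bar>sin ((x - y) / 2)\<bar>"
    by (simp add: mult_left_le)
  also have "\<dots> \<le> \<bar>x - y\<bar>"
    using abs_sin_x_le_abs_x[of "(x - y) / 2"] by simp
  finally show ?thesis .
qed

lemma abs_convex_comb_diff_le:
  fixes x y z e :: real
  assumes "0 \<le> \<mu>" "\<mu> \<le> 1" "\<bar>x - z\<bar> \<le> e" "\<bar>y - z\<bar> \<le> e"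
  shows "\<bar>\<mu> * x + (1 - \<mu>) * y - z\<bar> \<le> e"
proof -
  have "\<mu> * x + (1 - \<mu>) * y - z = \<mu> * (x - z) + (1 - \<mu>) * (y - z)" by algebra
  moreover have "\<mu> * (x - z) + (1 - \<mu>) * (y - z) \<le> e" "\<mu> * (z - x) + (1 - \<mu>) * (z - y) \<le> e"
    using assms by (auto intro!: convex_bound_le)
  ultimately show ?thesis by (simp add: algebra_simps)
qed

lemma C1_strip_convex_comb_radial_bounded:
  assumes "0 < eps" and f: "C1_strip eps f fr ft" and g: "C1_strip eps g gr gt"
  shows "\<exists>B. \<forall>\<^sub>F r in at_right 0. \<forall>\<mu>\<in>{0..1}. \<forall>t. \<bar>\<mu> * gr r t + (1 - \<mu>) * fr r t\<bar> \<le> B"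
proof -
  obtain Bf Bg where Bf: "\<forall>\<^sub>F r in at_right 0. \<forall>t. \<bar>fr r t\<bar> \<le> Bf"
    and Bg: "\<forall>\<^sub>F r in at_right 0. \<forall>t. \<bar>gr r t\<bar> \<le> Bg"
    using strip_bounded_at_boundary[OF C1_strip_continuous_partials(1)[OF f] \<open>0 < eps\<close>]
      strip_bounded_at_boundary[OF C1_strip_continuous_partials(1)[OF g] \<open>0 < eps\<close>]
      C1_strip_periodic_r[OF f] C1_strip_periodic_r[OF g] by metis
  have "\<forall>\<^sub>F r in at_right 0. \<forall>\<mu>\<in>{0..1}. \<forall>t. \<bar>\<mu> * gr r t + (1 - \<mu>) * fr r t\<bar> \<le> max Bf Bg"
    using Bf Bg by eventually_elim
      (intro ballI allI abs_convex_comb_diff_le[where z = 0, simplified]; force simp: le_max_iff_disj)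
  then show ?thesis by blast
qed

lemma twist_perturbation:
  fixes b b0 \<phi> \<phi>0 l L M :: real
  assumes "b0 + l * sin (2 * \<phi>0) \<le> - M" "\<bar>b - b0\<bar> \<le> M / 4" "\<bar>l\<bar> \<le> L"
    and "\<bar>\<phi> - \<phi>0\<bar> \<le> M / (8 * (L + 1))"
  shows "b + l * sin (2 * \<phi>) \<le> - (M / 2)"
proof -
  have "0 \<le> L" "0 \<le> M" using assms(2,3) by linarith+
  have "\<bar>sin (2 * \<phi>) - sin (2 * \<phi>0)\<bar> \<le> 2 * (M / (8 * (L + 1)))"
    using abs_sin_diff_le[of "2 * \<phi>" "2 * \<phi>0"] assms(4) by linarith
  then have "\<bar>l * sin (2 * \<phi>) - l * sin (2 * \<phi>0)\<bar> \<le> L * (2 * (M / (8 * (L + 1))))"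
    unfolding right_diff_distrib[symmetric] abs_mult using assms(3) by (intro mult_mono) auto
  also have "\<dots> \<le> M / 4" using \<open>0 \<le> L\<close> \<open>0 \<le> M\<close> by (simp add: field_simps)
  finally show ?thesis using assms(1,2) by linarith
qed

lemma twist_persists_near_boundary:
  fixes lam :: "real \<Rightarrow> real"
  assumes "0 < eps" and \<theta>: "C1_strip eps \<theta> \<theta>r \<theta>t" and \<omega>: "C1_strip eps \<omega> \<omega>r \<omega>t"
    and lam_cont: "continuous_on UNIV lam" and lam_per: "\<And>t. lam (t + 1) = lam t"
    and twist: "\<And>t. \<theta>t 0 t < - lam t * sin (2 * \<theta> 0 t)"
    and same_bdry: "\<And>t. \<omega> 0 t = \<theta> 0 t"
  shows "\<exists>m>0. \<forall>\<^sub>F r in at_right 0. \<forall>\<mu>\<in>{0..1}. \<forall>t.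
           \<mu> * \<omega>t r t + (1 - \<mu>) * \<theta>t r t + lam t * sin (2 * (\<mu> * \<omega> r t + (1 - \<mu>) * \<theta> r t)) \<le> - m"
proof -
  obtain L where L: "\<And>t. \<bar>lam t\<bar> \<le> L" using continuous_periodic_bounded[of lam, OF lam_cont lam_per] by blast
  define g where "g t = \<theta>t 0 t + lam t * sin (2 * \<theta> 0 t)" for t
  have "continuous_on UNIV g"
    unfolding g_def using \<open>0 < eps\<close> lam_cont
      continuous_on_strip_boundary[OF C1_strip_continuous[OF \<theta>]]
      continuous_on_strip_boundary[OF C1_strip_continuous_partials(2)[OF \<theta>]]
    by (intro continuous_intros) auto
  moreover have "g (t + 1) = g t" for t
    unfolding g_def using C1_strip_periodic_t[OF \<theta>] C1_strip_periodic[OF \<theta>] lam_per \<open>0 < eps\<close> by simp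
  moreover have "g t < 0" for t using twist[of t] by (simp add: g_def)
  ultimately obtain M where "M > 0" and M: "\<And>t. g t \<le> - M"
    using continuous_periodic_negative_bounded_away[of g] by blast
  define e where "e = M / (8 * (L + 1))"
  have "0 < e" using L[of 0] \<open>M > 0\<close> by (simp add: e_def)
  have min_pos: "0 < min e (M / 4)" using \<open>0 < e\<close> \<open>M > 0\<close> by simp
  have \<omega>t_bdry: "\<omega>t 0 t = \<theta>t 0 t" for t
    using C1_strip_same_boundary_deriv_t[OF \<omega> \<theta> \<open>0 < eps\<close>] same_bdry by blast
  have "\<forall>\<^sub>F r in at_right 0. \<forall>t. \<bar>\<theta>t r t - \<theta>t 0 t\<bar> < M / 4 \<and> \<bar>\<omega>t r t - \<theta>t 0 t\<bar> < M / 4 \<and>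
      \<bar>\<theta> r t - \<theta> 0 t\<bar> < e \<and> \<bar>\<omega> r t - \<theta> 0 t\<bar> < e"
    using C1_strip_tendsto_boundary_uniformly[OF \<theta> \<open>0 < eps\<close> min_pos]
      C1_strip_tendsto_boundary_uniformly[OF \<omega> \<open>0 < eps\<close> min_pos]
    by eventually_elim (simp only: \<omega>t_bdry same_bdry min_less_iff_conj, blast)
  then have "\<forall>\<^sub>F r in at_right 0. \<forall>\<mu>\<in>{0..1}. \<forall>t.
      \<mu> * \<omega>t r t + (1 - \<mu>) * \<theta>t r t + lam t * sin (2 * (\<mu> * \<omega> r t + (1 - \<mu>) * \<theta> r t)) \<le> - (M / 2)"
  proof (rule eventually_mono, intro ballI allI)
    fix r \<mu> t :: real
    assume near: "\<forall>t. \<bar>\<theta>t r t - \<theta>t 0 t\<bar> < M / 4 \<and> \<bar>\<omega>t r t - \<theta>t 0 t\<bar> < M / 4 \<and>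
      \<bar>\<theta> r t - \<theta> 0 t\<bar> < e \<and> \<bar>\<omega> r t - \<theta> 0 t\<bar> < e" and "\<mu> \<in> {0..1}"
    have "\<bar>\<mu> * \<omega>t r t + (1 - \<mu>) * \<theta>t r t - \<theta>t 0 t\<bar> \<le> M / 4"
      using near \<open>\<mu> \<in> {0..1}\<close> by (intro abs_convex_comb_diff_le) (auto intro: less_imp_le)
    moreover have "\<bar>\<mu> * \<omega> r t + (1 - \<mu>) * \<theta> r t - \<theta> 0 t\<bar> \<le> e"
      using near \<open>\<mu> \<in> {0..1}\<close> by (intro abs_convex_comb_diff_le) (auto intro: less_imp_le)
    ultimately show "\<mu> * \<omega>t r t + (1 - \<mu>) * \<theta>t r t
        + lam t * sin (2 * (\<mu> * \<omega> r t + (1 - \<mu>) * \<theta> r t)) \<le> - (M / 2)"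
      using twist_perturbation M[unfolded g_def] L unfolding e_def by blast
  qed
  then show ?thesis using \<open>M > 0\<close> by (intro exI[of _ "M / 2"]) auto
qed

lemma surfH_has_derivative:
  assumes "((\<lambda>p. \<Phi> (fst p) (snd p)) has_derivative (\<lambda>p. fst p * a + snd p * b)) (at (r, t))"
  shows "(surfH \<Phi> has_derivative (\<lambda>(h, k).
           h *\<^sub>R (cos (\<Phi> r t) - r * sin (\<Phi> r t) * a, sin (\<Phi> r t) + r * cos (\<Phi> r t) * a, 0) +
           k *\<^sub>R (- r * sin (\<Phi> r t) * b, r * cos (\<Phi> r t) * b, 1))) (at (r, t))"
proof -
  have surfH_eq: "surfH \<Phi> = (\<lambda>p. (fst p * cos (\<Phi> (fst p) (snd p)), fst p * sin (\<Phi> (fst p) (snd p)), snd p))"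
    by (auto simp: surfH_def fun_eq_iff)
  show ?thesis
    unfolding surfH_eq
    by (rule has_derivative_eq_rhs) (auto intro!: derivative_eq_intros assms simp: fun_eq_iff algebra_simps)
qed

lemma not_in_span_if_det_nonzero:
  fixes v1 v2 w1 w2 y1 y2 :: real
  assumes "(y1 - w1) * v2 - (y2 - w2) * v1 \<noteq> 0"
  shows "(y1, y2, 1::real) \<notin> span {(v1, v2, 0), (w1, w2, 1)}"
proof
  assume "(y1, y2, 1::real) \<in> span {(v1, v2, 0), (w1, w2, 1)}"
  then obtain k where "y1 - k * v1 = w1" "y2 - k * v2 = w2"
    unfolding span_insert span_singleton by auto
  then have "y1 - w1 = k * v1" "y2 - w2 = k * v2" by auto
  then show False using assms by (simp add: algebra_simps)
qed

lemma surfH_transversal_if_det_nonzero: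
  fixes Y1 Y2 :: "real \<times> real \<times> real \<Rightarrow> real"
  assumes d\<Phi>: "((\<lambda>p. \<Phi> (fst p) (snd p)) has_derivative (\<lambda>p. fst p * a + snd p * b)) (at (r, t))"
    and det: "(Y1 (surfH \<Phi> (r, t)) + r * sin (\<Phi> r t) * b) * (sin (\<Phi> r t) + r * cos (\<Phi> r t) * a)
            - (Y2 (surfH \<Phi> (r, t)) - r * cos (\<Phi> r t) * b) * (cos (\<Phi> r t) - r * sin (\<Phi> r t) * a) \<noteq> 0"
  shows "transversal_at (surfH \<Phi>) (\<lambda>p. (Y1 p, Y2 p, 1)) (r, t)"
  unfolding transversal_at_def
  using surfH_has_derivative[OF d\<Phi>]
    not_in_span_if_det_nonzero[of "Y1 (surfH \<Phi> (r, t))" "- r * sin (\<Phi> r t) * b"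
      "sin (\<Phi> r t) + r * cos (\<Phi> r t) * a" "Y2 (surfH \<Phi> (r, t))" "r * cos (\<Phi> r t) * b"
      "cos (\<Phi> r t) - r * sin (\<Phi> r t) * a"] det
  by (intro exI conjI) auto

lemma surfH_transversal_near_orbit:
  fixes Y1 Y2 :: "real \<times> real \<times> real \<Rightarrow> real"
  assumes Y_near: "\<And>x y. x\<^sup>2 + y\<^sup>2 < \<delta> \<Longrightarrow>
        \<bar>Y1 (x, y, t) - l * x\<bar> \<le> C * (x\<^sup>2 + y\<^sup>2) \<and> \<bar>Y2 (x, y, t) + l * y\<bar> \<le> C * (x\<^sup>2 + y\<^sup>2)"
    and d\<Phi>: "((\<lambda>p. \<Phi> (fst p) (snd p)) has_derivative (\<lambda>p. fst p * a + snd p * b)) (at (r, t))"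
    and twist: "b + l * sin (2 * \<Phi> r t) \<le> - m"
    and a: "\<bar>a\<bar> \<le> B" and l: "\<bar>l\<bar> \<le> L"
    and r: "0 < r" "r < 1" "r\<^sup>2 < \<delta>"
    and small: "r * (2 * \<bar>C\<bar> + B * (2 * \<bar>C\<bar> + L)) < m"
  shows "transversal_at (surfH \<Phi>) (\<lambda>p. (Y1 p, Y2 p, 1)) (r, t)"
proof (rule surfH_transversal_if_det_nonzero[OF d\<Phi>])
  have bounded_factor: "\<bar>X * u\<bar> \<le> K" if "\<bar>X\<bar> \<le> K" "\<bar>u\<bar> \<le> 1" for X u K :: real
    using that mult_left_le[OF that(2) abs_ge_zero[of X]] by (simp add: abs_mult)
  define c s where "c = cos (\<Phi> r t)" and "s = sin (\<Phi> r t)"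
  define E1 E2 where "E1 = Y1 (r * c, r * s, t) - l * (r * c)" and "E2 = Y2 (r * c, r * s, t) + l * (r * s)"
  have sc: "s\<^sup>2 + c\<^sup>2 = 1" "\<bar>s\<bar> \<le> 1" "\<bar>c\<bar> \<le> 1" by (simp_all add: s_def c_def)
  have "(r * c)\<^sup>2 + (r * s)\<^sup>2 = r\<^sup>2"
    using sc(1) by (simp add: power_mult_distrib flip: distrib_left)
  moreover have "C * r\<^sup>2 \<le> \<bar>C\<bar> * r\<^sup>2" by (intro mult_right_mono) auto
  ultimately have E: "\<bar>E1\<bar> \<le> \<bar>C\<bar> * r\<^sup>2" "\<bar>E2\<bar> \<le> \<bar>C\<bar> * r\<^sup>2"
    using Y_near[of "r * c" "r * s"] r(3) unfolding E1_def E2_def by auto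
  define W V where "W = E1 * s - E2 * c" and "V = E1 * c + E2 * s + l * r * (c\<^sup>2 - s\<^sup>2)"
  have W: "\<bar>W\<bar> \<le> 2 * \<bar>C\<bar> * r\<^sup>2"
    using abs_triangle_ineq4[of "E1 * s" "E2 * c"] bounded_factor[OF E(1) sc(2)] bounded_factor[OF E(2) sc(3)]
    unfolding W_def by linarith
  have "\<bar>c\<^sup>2 - s\<^sup>2\<bar> \<le> 1"
    using sc(1) zero_le_power2[of c] zero_le_power2[of s] unfolding abs_le_iff by linarith
  moreover have "\<bar>l * r\<bar> \<le> L * r" using l r(1) by (simp add: abs_mult mult_right_mono)
  ultimately have "\<bar>V\<bar> \<le> 2 * \<bar>C\<bar> * r\<^sup>2 + L * r"
    using abs_triangle_ineq[of "E1 * c + E2 * s" "l * r * (c\<^sup>2 - s\<^sup>2)"] abs_triangle_ineq[of "E1 * c" "E2 * s"]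
      bounded_factor[OF E(1) sc(3)] bounded_factor[OF E(2) sc(2)] bounded_factor[of "l * r"]
    unfolding V_def by fastforce
  moreover have "\<bar>C\<bar> * r\<^sup>2 \<le> \<bar>C\<bar> * r"
    using r by (intro mult_left_mono) (auto simp: power2_eq_square mult_left_le_one_le)
  ultimately have "\<bar>V\<bar> \<le> (2 * \<bar>C\<bar> + L) * r" by (simp add: algebra_simps)
  then have aV: "\<bar>r * a * V\<bar> \<le> r * (B * ((2 * \<bar>C\<bar> + L) * r))"
    using a r(1) by (simp add: abs_mult mult_mono mult_left_mono)
  have "(Y1 (r * c, r * s, t) + r * s * b) * (s + r * c * a) - (Y2 (r * c, r * s, t) - r * c * b) * (c - r * s * a)
      = r * (b * (s\<^sup>2 + c\<^sup>2) + l * (2 * s * c)) + W + r * a * V"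
    unfolding W_def V_def E1_def E2_def by (simp add: power2_eq_square algebra_simps)
  also have "\<dots> = r * (b + l * sin (2 * \<Phi> r t)) + W + r * a * V"
    by (simp add: sc(1) sin_double s_def c_def)
  also have "\<dots> < 0"
  proof -
    have "r * (b + l * sin (2 * \<Phi> r t)) \<le> - (r * m)" using mult_left_mono[OF twist] r(1) by simp
    moreover have "2 * \<bar>C\<bar> * r\<^sup>2 + r * (B * ((2 * \<bar>C\<bar> + L) * r)) < r * m"
      using mult_strict_left_mono[OF small r(1)] by (simp add: power2_eq_square algebra_simps)
    ultimately show ?thesis using W aV by linarith
  qed
  finally show "(Y1 (surfH \<Phi> (r, t)) + r * sin (\<Phi> r t) * b) * (sin (\<Phi> r t) + r * cos (\<Phi> r t) * a)
            - (Y2 (surfH \<Phi> (r, t)) - r * cos (\<Phi> r t) * b) * (cos (\<Phi> r t) - r * sin (\<Phi> r t) * a) \<noteq> 0"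
    by (simp add: surfH_def c_def s_def)
qed


theorem lemma3p3:
  fixes eps :: real
    and lam :: "real \<Rightarrow> real"
    and Y1 Y2 :: "real \<times> real \<times> real \<Rightarrow> real"
    and \<theta> \<theta>r \<theta>t \<omega> \<omega>r \<omega>t :: "real \<Rightarrow> real \<Rightarrow> real"
  assumes eps_pos: "eps > 0"
    and lam_cont: "continuous_on UNIV lam"
    and lam_per: "\<And>t. lam (t + 1) = lam t"
    and Y_per: "\<And>x y t. Y1 (x, y, t + 1) = Y1 (x, y, t) \<and> Y2 (x, y, t + 1) = Y2 (x, y, t)"
    and Y_approx: "\<exists>C \<delta>. \<delta> > 0 \<and> (\<forall>x y t. x\<^sup>2 + y\<^sup>2 < \<delta> \<longrightarrow>
                \<bar>Y1 (x, y, t) - lam t * x\<bar> \<le> C * (x\<^sup>2 + y\<^sup>2) \<and>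
                \<bar>Y2 (x, y, t) + lam t * y\<bar> \<le> C * (x\<^sup>2 + y\<^sup>2))"
    and \<theta>_C1: "C1_strip eps \<theta> \<theta>r \<theta>t"
    and \<omega>_C1: "C1_strip eps \<omega> \<omega>r \<omega>t"
    and twist: "\<And>t. \<theta>t 0 t < - lam t * sin (2 * \<theta> 0 t)"
    and same_bdry: "\<And>t. \<omega> 0 t = \<theta> 0 t"
  shows "\<exists>\<rho>0 > 0. \<forall>\<mu> \<in> {0..1}. \<forall>r t. 0 < r \<and> r < \<rho>0 \<longrightarrow>
           transversal_at (surfH (\<lambda>r t. \<mu> * \<omega> r t + (1 - \<mu>) * \<theta> r t))
                          (\<lambda>p. (Y1 p, Y2 p, 1)) (r, t)"
proof -
  obtain C \<delta> where Y_near: "\<And>x y t. x\<^sup>2 + y\<^sup>2 < \<delta> \<Longrightarrow>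
      \<bar>Y1 (x, y, t) - lam t * x\<bar> \<le> C * (x\<^sup>2 + y\<^sup>2) \<and> \<bar>Y2 (x, y, t) + lam t * y\<bar> \<le> C * (x\<^sup>2 + y\<^sup>2)"
    and "\<delta> > 0"
    using Y_approx by blast
  obtain L where L: "\<And>t. \<bar>lam t\<bar> \<le> L"
    using continuous_periodic_bounded[of lam, OF lam_cont lam_per] by blast
  obtain m where "m > 0" and twist_near: "\<forall>\<^sub>F r in at_right 0. \<forall>\<mu>\<in>{0..1}. \<forall>t.
      \<mu> * \<omega>t r t + (1 - \<mu>) * \<theta>t r t + lam t * sin (2 * (\<mu> * \<omega> r t + (1 - \<mu>) * \<theta> r t)) \<le> - m"
    using twist_persists_near_boundary[OF eps_pos \<theta>_C1 \<omega>_C1 lam_cont lam_per twist same_bdry] by blast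
  obtain B where radial_bound: "\<forall>\<^sub>F r in at_right 0. \<forall>\<mu>\<in>{0..1}. \<forall>t.
      \<bar>\<mu> * \<omega>r r t + (1 - \<mu>) * \<theta>r r t\<bar> \<le> B"
    using C1_strip_convex_comb_radial_bounded[OF eps_pos \<theta>_C1 \<omega>_C1] by blast
  define K where "K = 2 * \<bar>C\<bar> + B * (2 * \<bar>C\<bar> + L)"
  have "((\<lambda>r. r) \<longlongrightarrow> 0) (at_right 0)" "((\<lambda>r. r\<^sup>2) \<longlongrightarrow> 0) (at_right (0::real))"
    "((\<lambda>r. r * K) \<longlongrightarrow> 0) (at_right 0)"
    by (auto intro!: tendsto_eq_intros)
  then have small: "\<forall>\<^sub>F r in at_right 0. r < min eps 1 \<and> r\<^sup>2 < \<delta> \<and> r * K < m"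
    using \<open>\<delta> > 0\<close> \<open>m > 0\<close> eps_pos by (auto intro!: eventually_conj order_tendstoD(2))
  have "\<forall>\<^sub>F r in at_right 0. \<forall>\<mu>\<in>{0..1}. \<forall>t.
      transversal_at (surfH (\<lambda>r t. \<mu> * \<omega> r t + (1 - \<mu>) * \<theta> r t)) (\<lambda>p. (Y1 p, Y2 p, 1)) (r, t)"
    using eventually_at_right_less[of 0] small twist_near radial_bound
  proof eventually_elim
    case (elim r)
    show ?case
      using elim K_def
      by (intro ballI allI surfH_transversal_near_orbit[OF Y_near
            C1_strip_has_derivative_interior[OF C1_strip_lincomb[OF \<omega>_C1 \<theta>_C1]], where B = B and L = L])
         (auto simp: L)
  qed
  then show ?thesis unfolding eventually_at_right_field by blast
qed

end
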